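(* Let $d>1$, $e\geq 1$, $n\geq 1$. A basis of $H^\bullet(\Gamma(de,e,n);\mathbb{Q})$ is naturally indexed by the orbits, under the action of $W=G(de,e,n)$, of the set of invariant $de$-multigraphs with loops on $n$ vertices: for each orbit with representative $\Delta$, the class $\sum_{w\in W}w(\omega_\Delta)$ is nonzero, and these classes form a basis, the class of $\Delta$ having degree equal to the number of edges plus loops of $\Delta$.
   Context: For a finite complex reflection group $W$ with hyperplane set $\mathcal A$, $P=\pi_1(\mathbb{C}^\ell\setminus\bigcup\mathcal A)$, $B=\pi_1((\mathbb{C}^\ell\setminus\bigcup\mathcal A)/W)$, $\Gamma=B/[P,P]$; then $H^\bullet(\Gamma;\mathbb{Q})\cong\Lambda^\bullet(\mathbb{Q}\mathcal A)^W$, where the degree-one part has basis the forms $d\log$ of the hyperplanes' linear forms, permuted by $W$. $G(de,e,n)$ is the group of $n\times n$ monomial matrices with nonzero entries in $\mu_{de}$ whose product is a $d$-th root of unity; $\Gamma(de,e,n)$ is $\Gamma$ for it. Its hyperplanes are $z_i=\zeta z_j$ ($i<j$, $\zeta\in\mu_{de}$) and $z_i=0$. $\tilde K_n(de)$ is the multigraph on $\{1,\dots,n\}$ with $de$ edges between each pair $i<j$, labelled by $\mu_{de}$, and one unlabelled loop at each vertex; a $de$-multigraph with loops on $n$ vertices is a subgraph of $\tilde K_n(de)$ (subset of edges and loops). The edge $(i,j,\zeta)$ corresponds to $d\log(z_i-\zeta z_j)$, the loop at $i$ to $d\log(z_i)$, and $\Delta$ to the wedge product $\omega_\Delta$ of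 these forms, edges first in lexicographic order of $(i,j,\zeta)$ (for a fixed order of $\mu_{de}$), then loops. $W$ acts on such multigraphs through its action on hyperplanes. $\mathrm{Stab}_W(\Delta)$ is the subgroup of $W$ preserving $\Delta$; $\Delta$ is invariant if every element of $\mathrm{Stab}_W(\Delta)$ induces an even permutation of the set of edges and loops of $\Delta$. *)

theory Defs
  imports Complex_Main "HOL-Combinatorics.Permutations"
begin

text \<open>Hyperplanes of G(de,e,n), i.e. edges and loops of the complete multigraph
  with loops on vertices 1..n.  E i j k (i<j, k<de) is the hyperplane z_i = zeta^k z_j
  (zeta = exp(2 pi i/(de))), i.e. the edge (i,j,zeta^k); L i is z_i = 0, the loop at i.\<close>

datatype hyp = E nat nat nat | L nat

definition root :: "nat \<Rightarrow> nat \<Rightarrow> complex" where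
  "root m k = cis (2 * pi * real k / real m)"

text \<open>The ambient space C^n, as functions supported on 1..n.\<close>
definition cvec :: "nat \<Rightarrow> (nat \<Rightarrow> complex) set" where
  "cvec n = {z. \<forall>i. i \<notin> {1..n} \<longrightarrow> z i = 0}"

fun hypset :: "nat \<Rightarrow> nat \<Rightarrow> hyp \<Rightarrow> (nat \<Rightarrow> complex) set" where
  "hypset n m (E i j k) = {z \<in> cvec n. z i = root m k * z j}"
| "hypset n m (L i) = {z \<in> cvec n. z i = 0}"

definition hyps :: "nat \<Rightarrow> nat \<Rightarrow> hyp set" where
  "hyps n m = {E i j k | i j k. 1 \<le> i \<and> i < j \<and> j \<le> n \<and> k < m} \<union> {L i | i. 1 \<le> i \<and> i \<le> n}"

definition mv :: "nat \<Rightarrow> (nat \<Rightarrow> nat \<Rightarrow> complex) \<Rightarrow> (nat \<Rightarrow> complex) \<Rightarrow> (nat \<Rightarrow> complex)" where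
  "mv n M z = (\<lambda>i. if i \<in> {1..n} then (\<Sum>j\<in>{1..n}. M i j * z j) else 0)"

text \<open>G(de,e,n): monomial n x n matrices with nonzero entries in mu_{de}
  whose product of nonzero entries is a d-th root of unity.\<close>
definition Gde :: "nat \<Rightarrow> nat \<Rightarrow> nat \<Rightarrow> (nat \<Rightarrow> nat \<Rightarrow> complex) set" where
  "Gde d e n = {M.
      (\<forall>i j. M i j \<noteq> 0 \<longrightarrow> i \<in> {1..n} \<and> j \<in> {1..n})
    \<and> (\<forall>i\<in>{1..n}. \<exists>!j. j \<in> {1..n} \<and> M i j \<noteq> 0)
    \<and> (\<forall>j\<in>{1..n}. \<exists>!i. i \<in> {1..n} \<and> M i j \<noteq> 0)
    \<and> (\<forall>i j. M i j \<noteq> 0 \<longrightarrow> M i j ^ (d * e) = 1)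
    \<and> (\<Prod>i\<in>{1..n}. \<Prod>j\<in>{1..n}. (if M i j = 0 then 1 else M i j)) ^ d = 1}"

definition hact :: "nat \<Rightarrow> nat \<Rightarrow> (nat \<Rightarrow> nat \<Rightarrow> complex) \<Rightarrow> hyp \<Rightarrow> hyp" where
  "hact n m M h = (THE h'. h' \<in> hyps n m \<and> hypset n m h' = mv n M ` hypset n m h)"

fun hless :: "hyp \<Rightarrow> hyp \<Rightarrow> bool" where
  "hless (E i j k) (E i' j' k') = (i < i' \<or> (i = i' \<and> (j < j' \<or> (j = j' \<and> k < k'))))"
| "hless (E _ _ _) (L _) = True"
| "hless (L _) (E _ _ _) = False"
| "hless (L i) (L i') = (i < i')"

text \<open>Sign with which w maps omega_S to omega_{w(S)}: w(omega_S) is the wedge of the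
  images in the order of S; reordering gives (-1)^(number of inversions).\<close>
definition wsign :: "nat \<Rightarrow> nat \<Rightarrow> (nat \<Rightarrow> nat \<Rightarrow> complex) \<Rightarrow> hyp set \<Rightarrow> rat" where
  "wsign n m M S = (-1) ^ card {(h, h'). h \<in> S \<and> h' \<in> S \<and> hless h h'
                                      \<and> hless (hact n m M h') (hact n m M h)}"

text \<open>The exterior algebra Lambda(Q A), elements written in coordinates with respect to the
  basis omega_S (S a subset of A, wedge in the fixed order).\<close>
definition ext_alg :: "nat \<Rightarrow> nat \<Rightarrow> (hyp set \<Rightarrow> rat) set" where
  "ext_alg n m = {x. \<forall>T. x T \<noteq> 0 \<longrightarrow> T \<subseteq> hyps n m}"

definition omega :: "hyp set \<Rightarrow> (hyp set \<Rightarrow> rat)" where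
  "omega D = (\<lambda>T. if T = D then 1 else 0)"

definition wact :: "nat \<Rightarrow> nat \<Rightarrow> (nat \<Rightarrow> nat \<Rightarrow> complex) \<Rightarrow> (hyp set \<Rightarrow> rat) \<Rightarrow> (hyp set \<Rightarrow> rat)" where
  "wact n m M x = (\<lambda>T. \<Sum>S\<in>{S. S \<subseteq> hyps n m \<and> hact n m M ` S = T}. wsign n m M S * x S)"

definition invariants :: "nat \<Rightarrow> nat \<Rightarrow> nat \<Rightarrow> (hyp set \<Rightarrow> rat) set" where
  "invariants d e n = {x \<in> ext_alg n (d * e). \<forall>M\<in>Gde d e n. wact n (d * e) M x = x}"

definition stab :: "nat \<Rightarrow> nat \<Rightarrow> nat \<Rightarrow> hyp set \<Rightarrow> (nat \<Rightarrow> nat \<Rightarrow> complex) set" where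
  "stab d e n D = {M \<in> Gde d e n. hact n (d * e) M ` D = D}"

definition invariant_graph :: "nat \<Rightarrow> nat \<Rightarrow> nat \<Rightarrow> hyp set \<Rightarrow> bool" where
  "invariant_graph d e n D \<longleftrightarrow> D \<subseteq> hyps n (d * e) \<and>
     (\<forall>M\<in>stab d e n D. evenperm (\<lambda>h. if h \<in> D then hact n (d * e) M h else h))"

definition graph_orbits :: "nat \<Rightarrow> nat \<Rightarrow> nat \<Rightarrow> hyp set set set" where
  "graph_orbits d e n = {{hact n (d * e) M ` D | M. M \<in> Gde d e n} | D. invariant_graph d e n D}"

definition orbsum :: "nat \<Rightarrow> nat \<Rightarrow> nat \<Rightarrow> hyp set \<Rightarrow> (hyp set \<Rightarrow> rat)" where
  "orbsum d e n D = (\<lambda>T. \<Sum>M\<in>Gde d e n. wact n (d * e) M (omega D) T)"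

end

(*
  W acts on the hyperplanes by permutations, and w maps omega_S to +-omega_(wS), the sign
  being (-1) to the number of pairs of S whose order w reverses.  Consequently the orbit sum
  of S lives on the W-orbit of S, and moving S inside its orbit only changes the orbit sum by
  a sign.  If some element of the stabiliser of S permutes S oddly, it negates the orbit sum,
  which therefore vanishes; if S is invariant, the coefficient of omega_S in its own orbit sum
  is the order of the stabiliser.  Orbit sums of different orbits have disjoint supports, so
  the chosen ones are independent, and averaging an invariant x over W (Reynolds operator)
  writes x as a combination of orbit sums.
*)
theory Submission
  imports Defs
begin

section \<open>Inversion sign\<close>

definition inversions :: "('a::linorder \<Rightarrow> 'b::linorder) \<Rightarrow> 'a set \<Rightarrow> ('a \<times> 'a) set" where
  "inversions f S = {(x, y). x \<in> S \<and> y \<in> S \<and> x < y \<and> f y < f x}"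

definition inversion_sign :: "('a::linorder \<Rightarrow> 'b::linorder) \<Rightarrow> 'a set \<Rightarrow> int" where
  "inversion_sign f S = (-1) ^ card (inversions f S)"

definition ascending_pairs :: "'a::linorder set \<Rightarrow> ('a \<times> 'a) set" where
  "ascending_pairs S = {(x, y). x \<in> S \<and> y \<in> S \<and> x < y}"

definition order_sign :: "'a::linorder \<Rightarrow> 'a \<Rightarrow> int" where
  "order_sign u v = (if u < v then 1 else -1)"

lemma inversion_sign_cong:
  "(\<And>x. x \<in> S \<Longrightarrow> f x = g x) \<Longrightarrow> inversion_sign f S = inversion_sign g S"
  unfolding inversion_sign_def inversions_def
  by (rule arg_cong[where f = "\<lambda>A. (-1) ^ card A"]) auto

lemma inversion_sign_mult_self: "inversion_sign f S * inversion_sign f S = 1"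
  by (simp add: inversion_sign_def flip: power_add mult_2 power_mult)

lemma finite_ascending_pairs: "finite S \<Longrightarrow> finite (ascending_pairs S)"
  by (rule finite_subset[of _ "S \<times> S"]) (auto simp: ascending_pairs_def)

lemma inversion_sign_eq_prod:
  assumes "finite S" "inj_on f S"
  shows "inversion_sign f S = (\<Prod>(x, y)\<in>ascending_pairs S. order_sign (f x) (f y))"
proof -
  have "(\<Prod>(x, y)\<in>ascending_pairs S. order_sign (f x) (f y))
      = (\<Prod>p\<in>ascending_pairs S. if p \<in> inversions f S then -1 else 1)"
  proof (rule prod.cong[OF refl])
    fix p assume "p \<in> ascending_pairs S"
    then obtain x y where "p = (x, y)" "x \<in> S" "y \<in> S" "x < y"
      by (auto simp: ascending_pairs_def)
    moreover from this have "f x \<noteq> f y" using assms(2) by (metis inj_onD less_irrefl)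
    ultimately show "(case p of (x, y) \<Rightarrow> order_sign (f x) (f y))
        = (if p \<in> inversions f S then -1 else 1)"
      by (auto simp: order_sign_def inversions_def)
  qed
  also have "\<dots> = (-1) ^ card (ascending_pairs S \<inter> inversions f S)"
    by (simp add: prod.If_cases finite_ascending_pairs[OF assms(1)])
  also have "ascending_pairs S \<inter> inversions f S = inversions f S"
    by (auto simp: ascending_pairs_def inversions_def)
  finally show ?thesis by (simp add: inversion_sign_def)
qed

lemma bij_betw_sorted_image_pairs:
  assumes "inj_on g S"
  shows "bij_betw (\<lambda>(x, y). (min (g x) (g y), max (g x) (g y)))
           (ascending_pairs S) (ascending_pairs (g ` S))"
proof (rule bij_betwI')
  fix p q assume "p \<in> ascending_pairs S" "q \<in> ascending_pairs S"
  then obtain x y x' y' where pq: "p = (x, y)" "q = (x', y')" "x < y" "x' < y'"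
    and S: "x \<in> S" "y \<in> S" "x' \<in> S" "y' \<in> S"
    by (auto simp: ascending_pairs_def)
  have "{g x, g y} = {g x', g y'} \<Longrightarrow> {x, y} = {x', y'}"
    using inj_on_image_eq_iff[OF assms, of "{x, y}" "{x', y'}"] S by simp
  moreover have "(min (g x) (g y), max (g x) (g y)) = (min (g x') (g y'), max (g x') (g y'))
      \<longleftrightarrow> {g x, g y} = {g x', g y'}"
    by (auto simp: min_def max_def doubleton_eq_iff)
  ultimately show "((\<lambda>(x, y). (min (g x) (g y), max (g x) (g y))) p
              = (\<lambda>(x, y). (min (g x) (g y), max (g x) (g y))) q) = (p = q)"
    using pq by (auto simp: doubleton_eq_iff)
next
  fix p assume "p \<in> ascending_pairs S"
  then obtain x y where "p = (x, y)" "x \<in> S" "y \<in> S" "x < y"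
    by (auto simp: ascending_pairs_def)
  moreover from this have "g x \<noteq> g y" using assms by (metis inj_onD less_irrefl)
  ultimately show "(\<lambda>(x, y). (min (g x) (g y), max (g x) (g y))) p \<in> ascending_pairs (g ` S)"
    by (auto simp: ascending_pairs_def min_def max_def)
next
  fix q assume "q \<in> ascending_pairs (g ` S)"
  then obtain x y where q: "q = (g x, g y)" "x \<in> S" "y \<in> S" "g x < g y"
    by (auto simp: ascending_pairs_def)
  then have "(min x y, max x y) \<in> ascending_pairs S"
    by (cases x y rule: linorder_cases) (auto simp: ascending_pairs_def min_def max_def)
  moreover have "q = (\<lambda>(x, y). (min (g x) (g y), max (g x) (g y))) (min x y, max x y)"
    using q by (auto simp: min_def max_def)
  ultimately show "\<exists>p\<in>ascending_pairs S. q = (\<lambda>(x, y). (min (g x) (g y), max (g x) (g y))) p"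
    by blast
qed

text \<open>The sign of f \<circ> g on a pair is that of g times the factor \<tau> contributed by f, and \<tau>
  is symmetric; so the product of \<tau> can be reindexed over the ascending pairs of g ` S.\<close>
lemma inversion_sign_comp:
  assumes S: "finite S" and g: "inj_on g S" and f: "inj_on f (g ` S)"
  shows "inversion_sign (f \<circ> g) S = inversion_sign g S * inversion_sign f (g ` S)"
proof -
  define \<tau> where "\<tau> u v = order_sign u v * order_sign (f u) (f v)" for u v
  have fg: "inj_on (f \<circ> g) S" using f g by (simp add: comp_inj_on)
  have \<tau>_sym: "\<tau> u v = \<tau> (min u v) (max u v)" if "f u \<noteq> f v" for u v
    using that by (cases u v rule: linorder_cases) (auto simp: \<tau>_def order_sign_def)
  have "inversion_sign (f \<circ> g) S
      = (\<Prod>(x, y)\<in>ascending_pairs S. order_sign (g x) (g y) * \<tau> (g x) (g y))"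
    unfolding inversion_sign_eq_prod[OF S fg]
    by (rule prod.cong[OF refl]) (auto simp: \<tau>_def order_sign_def)
  also have "\<dots> = inversion_sign g S * (\<Prod>(x, y)\<in>ascending_pairs S. \<tau> (g x) (g y))"
    by (simp add: prod.distrib inversion_sign_eq_prod[OF S g] case_prod_unfold)
  also have "(\<Prod>(x, y)\<in>ascending_pairs S. \<tau> (g x) (g y))
      = (\<Prod>(x, y)\<in>ascending_pairs S. case_prod \<tau> (min (g x) (g y), max (g x) (g y)))"
  proof (rule prod.cong[OF refl])
    fix p assume "p \<in> ascending_pairs S"
    then obtain x y where "p = (x, y)" "x \<in> S" "y \<in> S" "x < y"
      by (auto simp: ascending_pairs_def)
    moreover from this have "f (g x) \<noteq> f (g y)"
      using fg by (metis comp_apply inj_onD less_irrefl)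
    ultimately show "(case p of (x, y) \<Rightarrow> \<tau> (g x) (g y))
        = (case p of (x, y) \<Rightarrow> case_prod \<tau> (min (g x) (g y), max (g x) (g y)))"
      using \<tau>_sym by simp
  qed
  also have "\<dots> = (\<Prod>(u, v)\<in>ascending_pairs (g ` S). \<tau> u v)"
    using prod.reindex_bij_betw[OF bij_betw_sorted_image_pairs[OF g], of "case_prod \<tau>"]
    by (simp add: case_prod_unfold)
  also have "\<dots> = inversion_sign f (g ` S)"
    unfolding inversion_sign_eq_prod[OF finite_imageI[OF S] f]
    by (rule prod.cong[OF refl]) (auto simp: ascending_pairs_def \<tau>_def order_sign_def)
  finally show ?thesis .
qed

lemma inversions_transpose:
  assumes "a \<in> S" "b \<in> S" "a < b"
  shows "inversions (Transposition.transpose a b) S =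
     insert (a, b) ((\<lambda>c. (a, c)) ` {c \<in> S. a < c \<and> c < b}
                    \<union> (\<lambda>c. (c, b)) ` {c \<in> S. a < c \<and> c < b})"
  using assms by (auto simp: inversions_def transpose_def split: if_splits)

lemma inversion_sign_transpose:
  assumes "finite S" "a \<in> S" "b \<in> S" "a \<noteq> b"
  shows "inversion_sign (Transposition.transpose a b) S = -1"
proof -
  have "inversion_sign (Transposition.transpose a b) S = -1" if "a \<in> S" "b \<in> S" "a < b" for a b
  proof -
    define C where "C = {c \<in> S. a < c \<and> c < b}"
    have "finite C" using assms(1) by (simp add: C_def)
    moreover have "(\<lambda>c. (a, c)) ` C \<inter> (\<lambda>c. (c, b)) ` C = {}"
      and "(a, b) \<notin> (\<lambda>c. (a, c)) ` C \<union> (\<lambda>c. (c, b)) ` C"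
      by (auto simp: C_def)
    ultimately have "card (inversions (Transposition.transpose a b) S) = 1 + 2 * card C"
      by (simp add: inversions_transpose[OF that] flip: C_def)
        (simp add: card_Un_disjoint card_image inj_on_def)
    then show ?thesis by (simp add: inversion_sign_def)
  qed
  then show ?thesis
    using assms by (cases a b rule: linorder_cases) (metis transpose_commute)+
qed

lemma inversion_sign_permutes:
  assumes "p permutes S" "finite S"
  shows "inversion_sign p S = sign p"
  using assms
proof (induction p rule: permutes_induct)
  case id
  have "inversions (\<lambda>x. x) S = {}" by (auto simp: inversions_def)
  then show ?case by (simp add: inversion_sign_def id_def)
next
  case (swap a b p)
  have "inversion_sign (Transposition.transpose a b \<circ> p) S
      = inversion_sign p S * inversion_sign (Transposition.transpose a b) (p ` S)"
    by (rule inversion_sign_comp[OF assms(2) permutes_inj_on[OF swap.hyps(4)]]) simp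
  also have "\<dots> = - sign p"
    using inversion_sign_transpose[OF assms(2) swap.hyps(1-3)] swap.IH
      permutes_image[OF swap.hyps(4)]
    by simp
  also have "\<dots> = sign (Transposition.transpose a b \<circ> p)"
    using swap.hyps(3) permutes_imp_permutation[OF assms(2) swap.hyps(4)]
    by (simp add: sign_compose permutation_swap_id sign_swap_id)
  finally show ?case by (simp add: o_def)
qed

instantiation hyp :: linorder
begin

definition less_hyp :: "hyp \<Rightarrow> hyp \<Rightarrow> bool" where
  "x < y \<longleftrightarrow> hless x y"

definition less_eq_hyp :: "hyp \<Rightarrow> hyp \<Rightarrow> bool" where
  "x \<le> y \<longleftrightarrow> hless x y \<or> x = y"

instance proof
  fix x y z :: hyp
  show "x < y \<longleftrightarrow> x \<le> y \<and> \<not> y \<le> x"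
    unfolding less_hyp_def less_eq_hyp_def by (cases x; cases y) auto
  show "x \<le> x" by (simp add: less_eq_hyp_def)
  show "x \<le> y \<Longrightarrow> y \<le> z \<Longrightarrow> x \<le> z"
    unfolding less_eq_hyp_def by (cases x; cases y; cases z) auto
  show "x \<le> y \<Longrightarrow> y \<le> x \<Longrightarrow> x = y"
    unfolding less_eq_hyp_def by (cases x; cases y) auto
  show "x \<le> y \<or> y \<le> x"
    unfolding less_eq_hyp_def by (cases x; cases y) auto
qed

end

lemma wsign_eq_inversion_sign: "wsign n m M S = of_int (inversion_sign (hact n m M) S)"
  by (simp add: wsign_def inversion_sign_def inversions_def less_hyp_def)

lemma wsign_mult_self [simp]: "wsign n m M S * wsign n m M S = 1"
  by (simp add: wsign_eq_inversion_sign inversion_sign_mult_self flip: of_int_mult)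

lemma wsign_nonzero [simp]: "wsign n m M S \<noteq> 0"
  using wsign_mult_self[of n m M S] by (metis mult_zero_left zero_neq_one)

section \<open>Monomial matrices\<close>

lemma root_pow_eq_1:
  assumes "0 < m" shows "root m k ^ m = 1"
proof -
  have "real m * (2 * pi * real k / real m) = 2 * pi * real k" using assms by simp
  then have "root m k ^ m = cis (2 * pi * real k)" unfolding root_def DeMoivre by simp
  also have "\<dots> = 1" by (rule cis_multiple_2pi) simp
  finally show ?thesis .
qed

lemma root_surj:
  assumes "0 < m" "c ^ m = 1" shows "\<exists>k<m. root m k = c"
proof -
  have "c \<in> (\<lambda>k. cis (2 * pi * real k / real m)) ` {..<m}"
    using bij_betw_roots_unity[OF assms(1)] assms(2) unfolding bij_betw_def by blast
  then show ?thesis unfolding root_def by auto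
qed

lemma root_inj:
  assumes "k < m" "k' < m" "root m k = root m k'" shows "k = k'"
proof -
  have "inj_on (\<lambda>k. cis (2 * pi * real k / real m)) {..<m}"
    using bij_betw_roots_unity[of m] assms(1) unfolding bij_betw_def by simp
  then show ?thesis using assms unfolding root_def inj_on_def by blast
qed

lemma root_nonzero [simp]: "root m k \<noteq> 0"
  by (simp add: root_def)

lemma nonzero_if_pow_eq_1: "0 < (m::nat) \<Longrightarrow> (c::complex) ^ m = 1 \<Longrightarrow> c \<noteq> 0"
  by (cases m) auto

definition monomial ::
    "nat \<Rightarrow> (nat \<Rightarrow> nat) \<Rightarrow> (nat \<Rightarrow> complex) \<Rightarrow> nat \<Rightarrow> nat \<Rightarrow> complex" where
  "monomial n s a = (\<lambda>i j. if i \<in> {1..n} \<and> j \<in> {1..n} \<and> i = s j then a j else 0)"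

definition matmul ::
    "nat \<Rightarrow> (nat \<Rightarrow> nat \<Rightarrow> complex) \<Rightarrow> (nat \<Rightarrow> nat \<Rightarrow> complex) \<Rightarrow> nat \<Rightarrow> nat \<Rightarrow> complex" where
  "matmul n A B = (\<lambda>i k. \<Sum>j\<in>{1..n}. A i j * B j k)"

definition idmat :: "nat \<Rightarrow> nat \<Rightarrow> nat \<Rightarrow> complex" where
  "idmat n = monomial n id (\<lambda>_. 1)"

lemma mv_in_cvec [simp]: "mv n M z \<in> cvec n"
  by (auto simp: mv_def cvec_def)

lemma mv_matmul: "mv n (matmul n A B) z = mv n A (mv n B z)"
proof
  fix i
  show "mv n (matmul n A B) z i = mv n A (mv n B z) i"
  proof (cases "i \<in> {1..n}")
    case True
    have "mv n (matmul n A B) z i = (\<Sum>k\<in>{1..n}. \<Sum>j\<in>{1..n}. A i j * B j k * z k)"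
      using True by (simp add: mv_def matmul_def sum_distrib_right)
    also have "\<dots> = (\<Sum>j\<in>{1..n}. \<Sum>k\<in>{1..n}. A i j * B j k * z k)"
      by (rule sum.swap)
    also have "\<dots> = mv n A (mv n B z) i"
      using True by (simp add: mv_def sum_distrib_left mult.assoc)
    finally show ?thesis .
  qed (auto simp: mv_def)
qed

lemma mv_monomial:
  assumes s: "s permutes {1..n}"
  shows "mv n (monomial n s a) z = (\<lambda>i. if i \<in> {1..n} then a (inv s i) * z (inv s i) else 0)"
proof
  fix i
  show "mv n (monomial n s a) z i = (if i \<in> {1..n} then a (inv s i) * z (inv s i) else 0)"
  proof (cases "i \<in> {1..n}")
    case True
    have "(\<Sum>j\<in>{1..n}. monomial n s a i j * z j) = (\<Sum>j\<in>{1..n}. if j = inv s i then a j * z j else 0)"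
    proof (rule sum.cong[OF refl])
      fix j assume "j \<in> {1..n}"
      moreover have "i = s j \<longleftrightarrow> j = inv s i" using permutes_inv_eq[OF s] by metis
      ultimately show "monomial n s a i j * z j = (if j = inv s i then a j * z j else 0)"
        using True by (simp add: monomial_def)
    qed
    then show ?thesis
      using True permutes_in_image[OF permutes_inv[OF s], of i] by (simp add: mv_def)
  qed (auto simp: mv_def)
qed

definition monomial_inv_apply ::
    "nat \<Rightarrow> (nat \<Rightarrow> nat) \<Rightarrow> (nat \<Rightarrow> complex) \<Rightarrow> (nat \<Rightarrow> complex) \<Rightarrow> nat \<Rightarrow> complex" where
  "monomial_inv_apply n s a y = (\<lambda>j. if j \<in> {1..n} then y (s j) / a j else 0)"

context
  fixes n :: nat and s :: "nat \<Rightarrow> nat" and a :: "nat \<Rightarrow> complex"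
  assumes s: "s permutes {1..n}" and a: "\<forall>j\<in>{1..n}. a j \<noteq> 0"
begin

lemma monomial_inv_apply_mv:
  assumes "z \<in> cvec n"
  shows "monomial_inv_apply n s a (mv n (monomial n s a) z) = z"
proof
  fix j
  show "monomial_inv_apply n s a (mv n (monomial n s a) z) j = z j"
  proof (cases "j \<in> {1..n}")
    case True
    then have "s j \<in> {1..n}" using permutes_in_image[OF s] by blast
    then show ?thesis
      using True a by (simp add: monomial_inv_apply_def mv_monomial[OF s] permutes_inverses[OF s])
  qed (use assms in \<open>auto simp: monomial_inv_apply_def cvec_def\<close>)
qed

lemma mv_monomial_inv_apply:
  assumes "y \<in> cvec n"
  shows "mv n (monomial n s a) (monomial_inv_apply n s a y) = y"
proof
  fix i
  show "mv n (monomial n s a) (monomial_inv_apply n s a y) i = y i"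
  proof (cases "i \<in> {1..n}")
    case True
    then have "inv s i \<in> {1..n}" using permutes_in_image[OF permutes_inv[OF s]] by blast
    then show ?thesis
      using True a by (simp add: monomial_inv_apply_def mv_monomial[OF s] permutes_inverses[OF s])
  qed (use assms in \<open>auto simp: mv_monomial[OF s] cvec_def\<close>)
qed

lemma mv_monomial_image:
  assumes "X \<subseteq> cvec n"
  shows "mv n (monomial n s a) ` X = {y \<in> cvec n. monomial_inv_apply n s a y \<in> X}"
proof
  show "mv n (monomial n s a) ` X \<subseteq> {y \<in> cvec n. monomial_inv_apply n s a y \<in> X}"
    using assms monomial_inv_apply_mv by auto
  show "{y \<in> cvec n. monomial_inv_apply n s a y \<in> X} \<subseteq> mv n (monomial n s a) ` X"
    using mv_monomial_inv_apply by (metis (mono_tags, lifting) image_eqI mem_Collect_eq subsetI)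
qed

lemma bij_betw_mv_monomial: "bij_betw (mv n (monomial n s a)) (cvec n) (cvec n)"
proof (rule bij_betwI[of _ _ _ "monomial_inv_apply n s a"])
  show "monomial_inv_apply n s a \<in> cvec n \<rightarrow> cvec n"
    by (auto simp: cvec_def monomial_inv_apply_def)
qed (auto simp: monomial_inv_apply_mv mv_monomial_inv_apply)

end

lemma prod_nonzero_entries_monomial:
  assumes s: "s permutes {1..n}" and a: "\<forall>j\<in>{1..n}. a j \<noteq> 0"
  shows "(\<Prod>i\<in>{1..n}. \<Prod>j\<in>{1..n}. if monomial n s a i j = 0 then 1 else monomial n s a i j)
       = (\<Prod>j\<in>{1..n}. a j)"
proof -
  have "(\<Prod>i\<in>{1..n}. \<Prod>j\<in>{1..n}. if monomial n s a i j = 0 then 1 else monomial n s a i j)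
      = (\<Prod>i\<in>{1..n}. \<Prod>j\<in>{1..n}. if i = s j then a j else 1)"
    by (intro prod.cong refl) (use a in \<open>auto simp: monomial_def\<close>)
  also have "\<dots> = (\<Prod>j\<in>{1..n}. \<Prod>i\<in>{1..n}. if i = s j then a j else 1)"
    by (rule prod.swap)
  also have "\<dots> = (\<Prod>j\<in>{1..n}. a j)"
    by (rule prod.cong[OF refl]) (use permutes_in_image[OF s] in auto)
  finally show ?thesis .
qed

lemma monomial_in_Gde:
  assumes "0 < d * e" and s: "s permutes {1..n}" and a: "\<forall>j\<in>{1..n}. a j ^ (d * e) = 1"
    and det: "(\<Prod>j\<in>{1..n}. a j) ^ d = 1"
  shows "monomial n s a \<in> Gde d e n"
proof -
  have a0: "\<forall>j\<in>{1..n}. a j \<noteq> 0" using a nonzero_if_pow_eq_1[OF assms(1)] by blast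
  have nz: "monomial n s a i j \<noteq> 0 \<longleftrightarrow> i \<in> {1..n} \<and> j \<in> {1..n} \<and> i = s j" for i j
    using a0 by (auto simp: monomial_def)
  have "\<exists>!j. j \<in> {1..n} \<and> monomial n s a i j \<noteq> 0" if "i \<in> {1..n}" for i
    unfolding nz using that permutes_inv_eq[OF s] permutes_in_image[OF permutes_inv[OF s]]
    by (metis (no_types, lifting))
  moreover have "\<exists>!i. i \<in> {1..n} \<and> monomial n s a i j \<noteq> 0" if "j \<in> {1..n}" for j
    unfolding nz using that permutes_in_image[OF s] by blast
  moreover have "monomial n s a i j ^ (d * e) = 1" if "monomial n s a i j \<noteq> 0" for i j
    using that a by (auto simp: monomial_def split: if_splits)
  ultimately show ?thesis
    unfolding Gde_def using nz det prod_nonzero_entries_monomial[OF s a0] by simp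
qed

lemma Gde_obtain_column_permutation:
  assumes "M \<in> Gde d e n"
  obtains s where "s permutes {1..n}" "\<And>j. j \<in> {1..n} \<Longrightarrow> M (s j) j \<noteq> 0"
    "\<And>i j. M i j \<noteq> 0 \<Longrightarrow> i = s j"
proof -
  have supp: "\<And>i j. M i j \<noteq> 0 \<Longrightarrow> i \<in> {1..n} \<and> j \<in> {1..n}"
    and rows: "\<And>i. i \<in> {1..n} \<Longrightarrow> \<exists>!j. j \<in> {1..n} \<and> M i j \<noteq> 0"
    and cols: "\<And>j. j \<in> {1..n} \<Longrightarrow> \<exists>!i. i \<in> {1..n} \<and> M i j \<noteq> 0"
    using assms by (simp_all add: Gde_def)
  define s where "s j = (if j \<in> {1..n} then THE i. i \<in> {1..n} \<and> M i j \<noteq> 0 else j)" for j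
  have s_col: "s j \<in> {1..n} \<and> M (s j) j \<noteq> 0" if "j \<in> {1..n}" for j
    using theI'[OF cols[OF that]] that by (simp add: s_def)
  have "inj_on s {1..n}"
  proof (rule inj_onI)
    fix j j' assume j: "j \<in> {1..n}" and j': "j' \<in> {1..n}" and "s j = s j'"
    then have "M (s j) j \<noteq> 0" "M (s j) j' \<noteq> 0" using s_col[OF j] s_col[OF j'] by simp_all
    then show "j = j'" using rows[of "s j"] s_col[OF j] j j' by blast
  qed
  moreover have "s ` {1..n} = {1..n}"
    using endo_inj_surj[OF finite_atLeastAtMost _ \<open>inj_on s {1..n}\<close>] s_col by blast
  ultimately have "s permutes {1..n}"
    by (intro bij_imp_permutes) (auto simp: bij_betw_def s_def)
  moreover have "i = s j" if "M i j \<noteq> 0" for i j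
    using supp[OF that] that the1_equality[OF cols[of j], of i] by (simp add: s_def)
  ultimately show ?thesis using that s_col by blast
qed

lemma Gde_obtain_monomial:
  assumes "M \<in> Gde d e n"
  obtains s a where "s permutes {1..n}" "\<forall>j\<in>{1..n}. a j ^ (d * e) = 1"
    "(\<Prod>j\<in>{1..n}. a j) ^ d = 1" "M = monomial n s a"
proof -
  obtain s where s: "s permutes {1..n}" and s_col: "\<And>j. j \<in> {1..n} \<Longrightarrow> M (s j) j \<noteq> 0"
    and s_unique: "\<And>i j. M i j \<noteq> 0 \<Longrightarrow> i = s j"
    using Gde_obtain_column_permutation[OF assms] by blast
  have supp: "\<And>i j. M i j \<noteq> 0 \<Longrightarrow> i \<in> {1..n} \<and> j \<in> {1..n}"
    and roots: "\<And>i j. M i j \<noteq> 0 \<Longrightarrow> M i j ^ (d * e) = 1"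
    and det: "(\<Prod>i\<in>{1..n}. \<Prod>j\<in>{1..n}. if M i j = 0 then 1 else M i j) ^ d = 1"
    using assms by (simp_all add: Gde_def)
  define a where "a j = M (s j) j" for j
  have M: "M = monomial n s a"
  proof (intro ext)
    fix i j
    show "M i j = monomial n s a i j"
      using supp[of i j] s_unique[of i j] by (cases "M i j = 0") (auto simp: monomial_def a_def)
  qed
  have a0: "\<forall>j\<in>{1..n}. a j \<noteq> 0" using s_col by (simp add: a_def)
  show ?thesis
  proof
    show "\<forall>j\<in>{1..n}. a j ^ (d * e) = 1" using s_col roots by (simp add: a_def)
    show "(\<Prod>j\<in>{1..n}. a j) ^ d = 1"
      using det unfolding M prod_nonzero_entries_monomial[OF s a0] .
  qed (fact s M)+
qed

lemma matmul_monomial: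
  assumes "t permutes {1..n}"
  shows "matmul n (monomial n s a) (monomial n t b) = monomial n (s \<circ> t) (\<lambda>k. a (t k) * b k)"
proof (intro ext)
  fix i k
  have "matmul n (monomial n s a) (monomial n t b) i k
      = (\<Sum>j\<in>{1..n}. if j = t k then monomial n (s \<circ> t) (\<lambda>k. a (t k) * b k) i k else 0)"
    unfolding matmul_def by (rule sum.cong[OF refl]) (auto simp: monomial_def)
  then show "matmul n (monomial n s a) (monomial n t b) i k
      = monomial n (s \<circ> t) (\<lambda>k. a (t k) * b k) i k"
    using permutes_in_image[OF assms, of k] by (auto simp: monomial_def)
qed

lemma matmul_in_Gde:
  assumes "0 < d * e" "M \<in> Gde d e n" "N \<in> Gde d e n"
  shows "matmul n M N \<in> Gde d e n"
proof -
  obtain s a where s: "s permutes {1..n}" and a: "\<forall>j\<in>{1..n}. a j ^ (d * e) = 1"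
    and det_a: "(\<Prod>j\<in>{1..n}. a j) ^ d = 1" and M: "M = monomial n s a"
    using Gde_obtain_monomial[OF assms(2)] .
  obtain t b where t: "t permutes {1..n}" and b: "\<forall>j\<in>{1..n}. b j ^ (d * e) = 1"
    and det_b: "(\<Prod>j\<in>{1..n}. b j) ^ d = 1" and N: "N = monomial n t b"
    using Gde_obtain_monomial[OF assms(3)] .
  have "(\<Prod>k\<in>{1..n}. a (t k) * b k) = (\<Prod>k\<in>{1..n}. a k) * (\<Prod>k\<in>{1..n}. b k)"
    using prod.permute[OF t, of a] by (simp add: prod.distrib o_def)
  then have det: "(\<Prod>k\<in>{1..n}. a (t k) * b k) ^ d = 1"
    using det_a det_b by (simp add: power_mult_distrib)
  have roots: "\<forall>k\<in>{1..n}. (a (t k) * b k) ^ (d * e) = 1"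
    using a b permutes_in_image[OF t] by (simp add: power_mult_distrib)
  show ?thesis
    unfolding M N matmul_monomial[OF t]
    by (rule monomial_in_Gde[OF assms(1) permutes_compose[OF t s] roots det])
qed

lemma idmat_in_Gde: "0 < d * e \<Longrightarrow> idmat n \<in> Gde d e n"
  unfolding idmat_def by (rule monomial_in_Gde) (simp_all add: permutes_id)

lemma mv_idmat: "z \<in> cvec n \<Longrightarrow> mv n (idmat n) z = z"
  unfolding idmat_def mv_monomial[OF permutes_id] by (auto simp: cvec_def inv_id)

lemma bij_betw_mv_Gde:
  assumes "0 < d * e" "M \<in> Gde d e n"
  shows "bij_betw (mv n M) (cvec n) (cvec n)"
proof -
  obtain s a where "s permutes {1..n}" "\<forall>j\<in>{1..n}. a j ^ (d * e) = 1" "M = monomial n s a"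
    using Gde_obtain_monomial[OF assms(2)] .
  then show ?thesis
    using bij_betw_mv_monomial nonzero_if_pow_eq_1[OF assms(1)] by blast
qed

definition unit_vec :: "nat \<Rightarrow> nat \<Rightarrow> complex" where
  "unit_vec p = (\<lambda>q. if q = p then 1 else 0)"

lemma matrix_eqI_mv:
  assumes "\<And>i j. A i j \<noteq> 0 \<Longrightarrow> i \<in> {1..n} \<and> j \<in> {1..n}"
    and "\<And>i j. B i j \<noteq> 0 \<Longrightarrow> i \<in> {1..n} \<and> j \<in> {1..n}"
    and "\<And>z. z \<in> cvec n \<Longrightarrow> mv n A z = mv n B z"
  shows "A = B"
proof (intro ext)
  fix i j
  show "A i j = B i j"
  proof (cases "i \<in> {1..n} \<and> j \<in> {1..n}")
    case True
    have "unit_vec j \<in> cvec n" using True by (simp add: unit_vec_def cvec_def)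
    then have "mv n A (unit_vec j) i = mv n B (unit_vec j) i" using assms(3) by simp
    then show ?thesis using True by (simp add: mv_def unit_vec_def if_distrib cong: if_cong)
  next
    case False
    then have "A i j = 0" "B i j = 0" using assms(1,2) by blast+
    then show ?thesis by simp
  qed
qed

lemma Gde_supported: "M \<in> Gde d e n \<Longrightarrow> M i j \<noteq> 0 \<Longrightarrow> i \<in> {1..n} \<and> j \<in> {1..n}"
  unfolding Gde_def by blast

lemma matmul_right_cancel_Gde:
  assumes "0 < d * e" and Gde: "M \<in> Gde d e n" "M' \<in> Gde d e n" "N \<in> Gde d e n"
    and eq: "matmul n M N = matmul n M' N"
  shows "M = M'"
proof (rule matrix_eqI_mv[OF Gde_supported[OF Gde(1)] Gde_supported[OF Gde(2)]])
  fix z assume "z \<in> cvec n"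
  then obtain y where "y \<in> cvec n" "z = mv n N y"
    using bij_betw_mv_Gde[OF assms(1) Gde(3)] by (metis bij_betw_imp_surj_on imageE)
  then show "mv n M z = mv n M' z" using eq by (metis mv_matmul)
qed

lemma matmul_left_cancel_Gde:
  assumes "0 < d * e" and Gde: "M \<in> Gde d e n" "M' \<in> Gde d e n" "N \<in> Gde d e n"
    and eq: "matmul n N M = matmul n N M'"
  shows "M = M'"
proof (rule matrix_eqI_mv[OF Gde_supported[OF Gde(1)] Gde_supported[OF Gde(2)]])
  fix z
  have "mv n N (mv n M z) = mv n N (mv n M' z)" using eq by (metis mv_matmul)
  then show "mv n M z = mv n M' z"
    using bij_betw_mv_Gde[OF assms(1) Gde(3)] by (simp add: bij_betw_def inj_on_def)
qed

lemma finite_Gde: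
  assumes "0 < d * e"
  shows "finite (Gde d e n)"
proof -
  have "Gde d e n \<subseteq> (\<lambda>(s, a). monomial n s a) `
          ({s. s permutes {1..n}} \<times> ({1..n} \<rightarrow>\<^sub>E {z. z ^ (d * e) = 1}))"
  proof
    fix M assume "M \<in> Gde d e n"
    then obtain s a where "s permutes {1..n}" "\<forall>j\<in>{1..n}. a j ^ (d * e) = 1" "M = monomial n s a"
      by (rule Gde_obtain_monomial)
    moreover have "monomial n s a = monomial n s (restrict a {1..n})"
      by (auto simp: monomial_def fun_eq_iff)
    ultimately show "M \<in> (\<lambda>(s, a). monomial n s a) `
          ({s. s permutes {1..n}} \<times> ({1..n} \<rightarrow>\<^sub>E {z. z ^ (d * e) = 1}))"
      by (intro image_eqI[of _ _ "(s, restrict a {1..n})"]) auto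
  qed
  moreover have "finite ({s. s permutes {1..n}} \<times> ({1..n} \<rightarrow>\<^sub>E {z :: complex. z ^ (d * e) = 1}))"
    using assms
    by (intro finite_cartesian_product finite_permutations finite_PiE finite_roots_unity) auto
  ultimately show ?thesis
    by (meson finite_imageI finite_subset)
qed

lemma hypset_subset_cvec: "hypset n m h \<subseteq> cvec n"
  by (cases h) auto

fun hyp_support :: "hyp \<Rightarrow> nat set" where
  "hyp_support (E i j k) = {i, j}"
| "hyp_support (L i) = {i}"

lemma hyp_support_subset: "h \<in> hyps n m \<Longrightarrow> hyp_support h \<subseteq> {1..n}"
  by (auto simp: hyps_def)

lemma unit_vec_in_hypset_iff:
  assumes "h \<in> hyps n m" "p \<in> {1..n}"
  shows "unit_vec p \<in> hypset n m h \<longleftrightarrow> p \<notin> hyp_support h"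
  using assms by (cases h) (auto simp: hyps_def unit_vec_def cvec_def)

lemma hypset_inj:
  assumes "h \<in> hyps n m" "h' \<in> hyps n m" "hypset n m h = hypset n m h'"
  shows "h = h'"
proof -
  have supp: "hyp_support h = hyp_support h'"
    using hyp_support_subset[OF assms(1)] hyp_support_subset[OF assms(2)] assms
      unit_vec_in_hypset_iff[OF assms(1)] unit_vec_in_hypset_iff[OF assms(2)]
    by blast
  show ?thesis
  proof (cases h)
    case (E i j k)
    then obtain k' where h': "h' = E i j k'" and "k' < m" "k < m" "i < j" "j \<le> n"
      using assms(1,2) supp by (cases h') (auto simp: hyps_def doubleton_eq_iff)
    define w where "w = (\<lambda>q. if q = i then root m k else if q = j then 1 else 0)"
    have "w \<in> hypset n m h" using \<open>i < j\<close> \<open>j \<le> n\<close> assms(1) E by (auto simp: w_def cvec_def hyps_def)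
    then have "root m k = root m k'" using assms(3) h' \<open>i < j\<close> by (simp add: w_def)
    then show ?thesis using E h' root_inj \<open>k < m\<close> \<open>k' < m\<close> by blast
  next
    case (L i)
    then show ?thesis using supp assms(2) by (cases h') (auto simp: hyps_def)
  qed
qed

lemma edge_hypset_exists:
  assumes "0 < m" "p \<in> {1..n}" "q \<in> {1..n}" "p \<noteq> q" "c ^ m = 1"
  shows "\<exists>h\<in>hyps n m. hypset n m h = {y \<in> cvec n. y p = c * y q}"
proof (cases "p < q")
  case True
  obtain k where "k < m" "root m k = c" using root_surj assms(1,5) by blast
  then show ?thesis using True assms(2,3) by (intro bexI[of _ "E p q k"]) (auto simp: hyps_def)
next
  case False
  have "c \<noteq> 0" using nonzero_if_pow_eq_1 assms(1,5) by blast
  obtain k where "k < m" "root m k = inverse c"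
    using root_surj assms(1,5) by (metis power_inverse inverse_1)
  moreover have "{y \<in> cvec n. y q = inverse c * y p} = {y \<in> cvec n. y p = c * y q}"
    using \<open>c \<noteq> 0\<close> by (auto simp: field_simps)
  ultimately show ?thesis
    using False assms(2-4) by (intro bexI[of _ "E q p k"]) (auto simp: hyps_def)
qed

lemma monomial_image_hypset:
  assumes m: "0 < m" and s: "s permutes {1..n}" and a: "\<forall>j\<in>{1..n}. a j ^ m = 1"
    and h: "h \<in> hyps n m"
  shows "\<exists>h'\<in>hyps n m. hypset n m h' = mv n (monomial n s a) ` hypset n m h"
proof -
  have a0: "\<forall>j\<in>{1..n}. a j \<noteq> 0" using a nonzero_if_pow_eq_1[OF m] by blast
  note image = mv_monomial_image[OF s a0 hypset_subset_cvec]
  have s_in: "s j \<in> {1..n}" if "j \<in> {1..n}" for j using permutes_in_image[OF s] that by blast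
  show ?thesis
  proof (cases h)
    case (E i j k)
    with h have ij: "i \<in> {1..n}" "j \<in> {1..n}" "i < j" "k < m" by (auto simp: hyps_def)
    define c where "c = root m k * a i / a j"
    have "c ^ m = 1"
      using a ij root_pow_eq_1[OF m, of k] by (simp add: c_def power_mult_distrib power_divide)
    moreover have "s i \<noteq> s j" using ij permutes_inj_on[OF s] by (metis inj_onD less_irrefl)
    moreover have "mv n (monomial n s a) ` hypset n m h = {y \<in> cvec n. y (s i) = c * y (s j)}"
      unfolding image E using ij a0
      by (auto simp: monomial_inv_apply_def cvec_def c_def field_simps)
    ultimately show ?thesis using edge_hypset_exists[OF m s_in[OF ij(1)] s_in[OF ij(2)]] by simp
  next
    case (L i)
    with h have i: "i \<in> {1..n}" by (auto simp: hyps_def)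
    have "mv n (monomial n s a) ` hypset n m h = hypset n m (L (s i))"
      unfolding image L using i a0 by (auto simp: monomial_inv_apply_def cvec_def)
    moreover have "L (s i) \<in> hyps n m" using s_in[OF i] by (auto simp: hyps_def)
    ultimately show ?thesis by metis
  qed
qed

section \<open>The action of W on hyperplanes and forms\<close>

locale imprimitive_group =
  fixes d e n :: nat
  assumes order_pos: "0 < d * e"
begin

abbreviation "W \<equiv> Gde d e n"
abbreviation "Arr \<equiv> hyps n (d * e)"
abbreviation "act M \<equiv> hact n (d * e) M"
abbreviation "wsgn M S \<equiv> wsign n (d * e) M S"

lemma finite_W: "finite W"
  using finite_Gde[OF order_pos] .

lemma idmat_in_W: "idmat n \<in> W"
  using idmat_in_Gde[OF order_pos] .

lemma matmul_in_W: "M \<in> W \<Longrightarrow> N \<in> W \<Longrightarrow> matmul n M N \<in> W"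
  using matmul_in_Gde[OF order_pos] .

lemma finite_Arr: "finite Arr"
proof -
  have "Arr \<subseteq> (\<lambda>(i, j, k). E i j k) ` ({1..n} \<times> {1..n} \<times> {..<d * e}) \<union> L ` {1..n}"
    by (auto simp: hyps_def image_iff)
  then show ?thesis by (rule finite_subset) auto
qed

lemma bij_betw_matmul_right: "N \<in> W \<Longrightarrow> bij_betw (\<lambda>M. matmul n M N) W W"
  using finite_W matmul_in_W matmul_right_cancel_Gde[OF order_pos]
  by (intro bij_betw_imageI endo_inj_surj inj_onI) (auto simp: image_subset_iff)

lemma bij_betw_matmul_left: "N \<in> W \<Longrightarrow> bij_betw (\<lambda>M. matmul n N M) W W"
  using finite_W matmul_in_W matmul_left_cancel_Gde[OF order_pos]
  by (intro bij_betw_imageI endo_inj_surj inj_onI) (auto simp: image_subset_iff)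

lemma hact_spec:
  assumes "M \<in> W" "h \<in> Arr"
  shows "act M h \<in> Arr \<and> hypset n (d * e) (act M h) = mv n M ` hypset n (d * e) h"
proof -
  obtain s a where "s permutes {1..n}" "\<forall>j\<in>{1..n}. a j ^ (d * e) = 1" "M = monomial n s a"
    using Gde_obtain_monomial[OF assms(1)] .
  then obtain h' where h': "h' \<in> Arr" "hypset n (d * e) h' = mv n M ` hypset n (d * e) h"
    using monomial_image_hypset[OF order_pos _ _ assms(2)] by blast
  have "\<exists>!h'. h' \<in> Arr \<and> hypset n (d * e) h' = mv n M ` hypset n (d * e) h"
  proof (rule ex1I)
    show "h' \<in> Arr \<and> hypset n (d * e) h' = mv n M ` hypset n (d * e) h" using h' by blast
  qed (use h' hypset_inj in metis)
  then show ?thesis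
    unfolding hact_def by (rule theI')
qed

lemma hact_in_Arr: "M \<in> W \<Longrightarrow> h \<in> Arr \<Longrightarrow> act M h \<in> Arr"
  using hact_spec by blast

lemma hypset_hact: "M \<in> W \<Longrightarrow> h \<in> Arr \<Longrightarrow> hypset n (d * e) (act M h) = mv n M ` hypset n (d * e) h"
  using hact_spec by blast

lemma image_hact_subset: "M \<in> W \<Longrightarrow> S \<subseteq> Arr \<Longrightarrow> act M ` S \<subseteq> Arr"
  using hact_in_Arr by blast

lemma inj_on_hact: "M \<in> W \<Longrightarrow> inj_on (act M) Arr"
proof (rule inj_onI)
  fix h h' assume M: "M \<in> W" and h: "h \<in> Arr" "h' \<in> Arr" and "act M h = act M h'"
  then have "mv n M ` hypset n (d * e) h = mv n M ` hypset n (d * e) h'"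
    using hypset_hact by metis
  then have "hypset n (d * e) h = hypset n (d * e) h'"
    using inj_on_image_eq_iff[OF bij_betw_imp_inj_on[OF bij_betw_mv_Gde[OF order_pos M]]
        hypset_subset_cvec hypset_subset_cvec] by blast
  then show "h = h'" using hypset_inj h by blast
qed

lemma hact_matmul:
  assumes "M \<in> W" "N \<in> W" "h \<in> Arr"
  shows "act (matmul n M N) h = act M (act N h)"
proof (rule hypset_inj)
  show "hypset n (d * e) (act (matmul n M N) h) = hypset n (d * e) (act M (act N h))"
    using assms hact_in_Arr matmul_in_W by (simp add: hypset_hact mv_matmul image_image)
qed (use assms hact_in_Arr matmul_in_W in auto)

lemma hact_idmat:
  assumes "h \<in> Arr"
  shows "act (idmat n) h = h"
proof (rule hypset_inj)
  have "mv n (idmat n) ` hypset n (d * e) h = hypset n (d * e) h"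
    using mv_idmat hypset_subset_cvec by (metis image_cong image_ident subset_iff)
  then show "hypset n (d * e) (act (idmat n) h) = hypset n (d * e) h"
    using hypset_hact[OF idmat_in_W assms] by simp
qed (use assms hact_in_Arr idmat_in_W in auto)

lemma image_hact_matmul:
  "M \<in> W \<Longrightarrow> N \<in> W \<Longrightarrow> S \<subseteq> Arr \<Longrightarrow> act (matmul n M N) ` S = act M ` act N ` S"
  by (auto simp: hact_matmul image_image subset_iff intro!: image_cong)

lemma image_hact_idmat: "S \<subseteq> Arr \<Longrightarrow> act (idmat n) ` S = S"
  by (auto simp: hact_idmat subset_iff)

lemma wsign_matmul:
  assumes M: "M \<in> W" and N: "N \<in> W" and S: "S \<subseteq> Arr"
  shows "wsgn (matmul n M N) S = wsgn M (act N ` S) * wsgn N S"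
proof -
  have "inversion_sign (act (matmul n M N)) S = inversion_sign (act M \<circ> act N) S"
    using S by (intro inversion_sign_cong) (auto simp: hact_matmul[OF M N])
  also have "\<dots> = inversion_sign (act N) S * inversion_sign (act M) (act N ` S)"
    using S image_hact_subset[OF N S]
    by (intro inversion_sign_comp finite_subset[OF S finite_Arr]
          inj_on_subset[OF inj_on_hact[OF N]] inj_on_subset[OF inj_on_hact[OF M]])
  finally show ?thesis by (simp add: wsign_eq_inversion_sign)
qed

lemma wsign_stabiliser:
  assumes M: "M \<in> W" and S: "S \<subseteq> Arr" and fix_S: "act M ` S = S"
  shows "wsgn M S = (if evenperm (\<lambda>h. if h \<in> S then act M h else h) then 1 else -1)"
proof -
  define p where "p = (\<lambda>h. if h \<in> S then act M h else h)"
  have "inj_on p S"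
    using inj_on_subset[OF inj_on_hact[OF M] S] unfolding p_def inj_on_def by auto
  moreover have "p ` S = S" using fix_S unfolding p_def by simp
  ultimately have "p permutes S"
    by (intro bij_imp_permutes) (auto simp: bij_betw_def p_def)
  then have "inversion_sign p S = sign p"
    using inversion_sign_permutes finite_subset[OF S finite_Arr] by blast
  moreover have "inversion_sign (act M) S = inversion_sign p S"
    by (rule inversion_sign_cong) (simp add: p_def)
  ultimately show ?thesis by (simp add: wsign_eq_inversion_sign sign_def p_def)
qed

lemma wact_omega:
  assumes "D \<subseteq> Arr"
  shows "wact n (d * e) M (omega D) T = (if act M ` D = T then wsgn M D else 0)"
proof -
  have "finite {S. S \<subseteq> Arr \<and> act M ` S = T}"
    using finite_Arr by (rule rev_finite_subset[OF finite_Pow_iff[THEN iffD2]]) auto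
  then show ?thesis
    using assms by (simp add: wact_def omega_def if_distrib[of "\<lambda>x. _ * x"] sum.If_cases)
qed

lemma orbsum_apply:
  "D \<subseteq> Arr \<Longrightarrow> orbsum d e n D T = (\<Sum>M\<in>W. if act M ` D = T then wsgn M D else 0)"
  by (simp add: orbsum_def wact_omega)

end

section \<open>Orbit sums\<close>

definition graph_orbit :: "nat \<Rightarrow> nat \<Rightarrow> nat \<Rightarrow> hyp set \<Rightarrow> hyp set set" where
  "graph_orbit d e n D = {hact n (d * e) M ` D | M. M \<in> Gde d e n}"

lemma graph_orbits_eq: "graph_orbits d e n = {graph_orbit d e n D | D. invariant_graph d e n D}"
  by (simp add: graph_orbits_def graph_orbit_def)

context imprimitive_group
begin

abbreviation "orbit \<equiv> graph_orbit d e n"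

lemma graph_orbit_subset_Pow: "D \<subseteq> Arr \<Longrightarrow> orbit D \<subseteq> Pow Arr"
  unfolding graph_orbit_def using image_hact_subset by blast

lemma self_in_graph_orbit: "D \<subseteq> Arr \<Longrightarrow> D \<in> orbit D"
  unfolding graph_orbit_def using image_hact_idmat idmat_in_W
  by (metis (mono_tags, lifting) mem_Collect_eq)

lemma graph_orbit_image_hact:
  assumes N: "N \<in> W" and D: "D \<subseteq> Arr"
  shows "orbit (act N ` D) = orbit D"
proof
  show "orbit (act N ` D) \<subseteq> orbit D"
    unfolding graph_orbit_def using image_hact_matmul[OF _ N D] matmul_in_W[OF _ N] by fastforce
  show "orbit D \<subseteq> orbit (act N ` D)"
  proof
    fix S assume "S \<in> orbit D"
    then obtain M' where M': "M' \<in> W" "S = act M' ` D" unfolding graph_orbit_def by blast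
    then obtain M where "M \<in> W" "M' = matmul n M N"
      using bij_betw_matmul_right[OF N] by (metis bij_betw_imp_surj_on imageE)
    then show "S \<in> orbit (act N ` D)"
      unfolding graph_orbit_def using M' image_hact_matmul[OF _ N D] by blast
  qed
qed

lemma graph_orbit_eq_if_mem:
  assumes "D \<subseteq> Arr" "S \<in> orbit D"
  shows "orbit S = orbit D"
proof -
  obtain N where "N \<in> W" "S = act N ` D" using assms(2) unfolding graph_orbit_def by blast
  then show ?thesis using graph_orbit_image_hact assms(1) by simp
qed

lemma orbsum_image_hact:
  assumes N: "N \<in> W" and D: "D \<subseteq> Arr"
  shows "orbsum d e n (act N ` D) T = wsgn N D * orbsum d e n D T"
proof -
  have "orbsum d e n (act N ` D) T
      = (\<Sum>M\<in>W. if act M ` act N ` D = T then wsgn M (act N ` D) else 0)"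
    using orbsum_apply image_hact_subset[OF N D] by blast
  also have "\<dots>
      = (\<Sum>M\<in>W. wsgn N D * (if act (matmul n M N) ` D = T then wsgn (matmul n M N) D else 0))"
  proof (rule sum.cong[OF refl])
    fix M assume M: "M \<in> W"
    have "wsgn N D * wsgn (matmul n M N) D = wsgn M (act N ` D) * (wsgn N D * wsgn N D)"
      by (simp add: wsign_matmul[OF M N D])
    then show "(if act M ` act N ` D = T then wsgn M (act N ` D) else 0)
        = wsgn N D * (if act (matmul n M N) ` D = T then wsgn (matmul n M N) D else 0)"
      by (simp add: image_hact_matmul[OF M N D])
  qed
  also have "\<dots> = wsgn N D * (\<Sum>M\<in>W. if act (matmul n M N) ` D = T then wsgn (matmul n M N) D else 0)"
    by (simp add: sum_distrib_left)
  also have "(\<Sum>M\<in>W. if act (matmul n M N) ` D = T then wsgn (matmul n M N) D else 0)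
      = (\<Sum>M\<in>W. if act M ` D = T then wsgn M D else 0)"
    by (rule sum.reindex_bij_betw[OF bij_betw_matmul_right[OF N]])
  finally show ?thesis by (simp add: orbsum_apply[OF D])
qed

lemma wact_orbsum:
  assumes N: "N \<in> W" and D: "D \<subseteq> Arr"
  shows "wact n (d * e) N (orbsum d e n D) = orbsum d e n D"
proof
  fix T
  define A where "A = {S. S \<subseteq> Arr \<and> act N ` S = T}"
  have "finite A"
    unfolding A_def using finite_Arr by (rule rev_finite_subset[OF finite_Pow_iff[THEN iffD2]]) auto
  have "wact n (d * e) N (orbsum d e n D) T
      = (\<Sum>S\<in>A. \<Sum>M\<in>W. if act M ` D = S then wsgn N S * wsgn M D else 0)"
    unfolding wact_def A_def[symmetric]
    by (simp add: orbsum_apply[OF D] sum_distrib_left if_distrib[of "\<lambda>x. _ * x"] cong: if_cong)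
  also have "\<dots> = (\<Sum>M\<in>W. if act M ` D \<in> A then wsgn N (act M ` D) * wsgn M D else 0)"
    using \<open>finite A\<close> by (subst sum.swap) simp
  also have "\<dots> = (\<Sum>M\<in>W. if act (matmul n N M) ` D = T then wsgn (matmul n N M) D else 0)"
    using image_hact_subset[OF _ D] by (intro sum.cong)
      (auto simp: A_def image_hact_matmul[OF N _ D] wsign_matmul[OF N _ D])
  also have "\<dots> = orbsum d e n D T"
    by (simp add: orbsum_apply[OF D] sum.reindex_bij_betw[OF bij_betw_matmul_left[OF N],
          where g = "\<lambda>M. if act M ` D = T then wsgn M D else 0"])
  finally show "wact n (d * e) N (orbsum d e n D) T = orbsum d e n D T" .
qed

lemma orbsum_nonzero_imp_mem_orbit:
  assumes "D \<subseteq> Arr" "orbsum d e n D T \<noteq> 0"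
  shows "T \<in> orbit D"
proof (rule ccontr)
  assume "T \<notin> orbit D"
  then have "orbsum d e n D T = 0"
    unfolding orbsum_apply[OF assms(1)] graph_orbit_def by (intro sum.neutral) auto
  then show False using assms(2) by contradiction
qed

lemma card_stab_pos:
  assumes "D \<subseteq> Arr" shows "0 < card (stab d e n D)"
  using idmat_in_W image_hact_idmat[OF assms] finite_W
  by (auto simp: stab_def card_gt_0_iff)

lemma orbsum_self:
  assumes D: "invariant_graph d e n D"
  shows "orbsum d e n D D = of_nat (card (stab d e n D))"
proof -
  have DA: "D \<subseteq> Arr" using D by (simp add: invariant_graph_def)
  have "orbsum d e n D D = (\<Sum>M\<in>W. if act M ` D = D then 1 else 0)"
    unfolding orbsum_apply[OF DA]
    using D wsign_stabiliser[OF _ DA] by (intro sum.cong) (auto simp: invariant_graph_def stab_def)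
  also have "\<dots> = of_nat (card (stab d e n D))"
    by (simp add: sum.If_cases finite_W stab_def Collect_conj_eq Int_commute)
  finally show ?thesis .
qed

lemma orbsum_eq_0_if_not_invariant:
  assumes S: "S \<subseteq> Arr" and "\<not> invariant_graph d e n S"
  shows "orbsum d e n S T = 0"
proof -
  obtain M where "M \<in> stab d e n S" and odd: "\<not> evenperm (\<lambda>h. if h \<in> S then act M h else h)"
    using assms unfolding invariant_graph_def by blast
  then have M: "M \<in> W" and fix_S: "act M ` S = S" by (auto simp: stab_def)
  have "orbsum d e n S T = orbsum d e n (act M ` S) T" using fix_S by simp
  also have "\<dots> = - orbsum d e n S T"
    using orbsum_image_hact[OF M S] wsign_stabiliser[OF M S fix_S] odd by simp
  finally show ?thesis by simp
qed

section \<open>The orbit sums of invariant graphs form a basis\<close>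

abbreviation "GO \<equiv> graph_orbits d e n"

lemma graph_orbits_memberD:
  assumes "Q \<in> GO" "S \<in> Q"
  shows "Q = orbit S" "S \<subseteq> Arr"
proof -
  obtain D where D: "invariant_graph d e n D" "Q = orbit D"
    using assms(1) by (auto simp: graph_orbits_eq)
  then have DA: "D \<subseteq> Arr" by (simp add: invariant_graph_def)
  have S: "S \<in> orbit D" using D(2) assms(2) by simp
  then show "Q = orbit S" using graph_orbit_eq_if_mem[OF DA] D(2) by simp
  show "S \<subseteq> Arr" using graph_orbit_subset_Pow[OF DA] S by blast
qed

lemma graph_orbits_disjoint: "Q \<in> GO \<Longrightarrow> Q' \<in> GO \<Longrightarrow> S \<in> Q \<Longrightarrow> S \<in> Q' \<Longrightarrow> Q = Q'"
  using graph_orbits_memberD(1) by metis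

lemma graph_orbits_subset_Pow: "Q \<in> GO \<Longrightarrow> Q \<subseteq> Pow Arr"
  using graph_orbits_memberD(2) by blast

lemma finite_graph_orbits: "finite GO"
  by (rule finite_subset[of _ "Pow (Pow Arr)"]) (use graph_orbits_subset_Pow finite_Arr in auto)

lemma finite_graph_orbits_member: "Q \<in> GO \<Longrightarrow> finite Q"
  using graph_orbits_subset_Pow finite_Arr by (meson finite_Pow_iff finite_subset)

lemma invariant_graph_in_graph_orbits: "invariant_graph d e n S \<Longrightarrow> S \<in> \<Union>GO"
  using self_in_graph_orbit by (auto simp: graph_orbits_eq invariant_graph_def)

lemma orbsum_proportional:
  assumes "Q \<in> GO" "S \<in> Q" "S' \<in> Q"
  shows "\<exists>c. \<forall>T. orbsum d e n S T = c * orbsum d e n S' T"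
proof -
  have "S \<in> orbit S'" "S' \<subseteq> Arr" using graph_orbits_memberD[OF assms(1,3)] assms(2) by auto
  then obtain N where "N \<in> W" "S = act N ` S'" unfolding graph_orbit_def by blast
  then show ?thesis using orbsum_image_hact \<open>S' \<subseteq> Arr\<close> by blast
qed

lemma orbsum_nonzero_somewhere_on_orbit:
  assumes "Q \<in> GO" "R \<in> Q"
  obtains D where "D \<in> Q" "orbsum d e n R D \<noteq> 0"
proof -
  obtain D where D: "invariant_graph d e n D" "Q = orbit D"
    using assms(1) by (auto simp: graph_orbits_eq)
  then have DA: "D \<subseteq> Arr" by (simp add: invariant_graph_def)
  obtain N where N: "N \<in> W" "R = act N ` D"
    using assms(2) D(2) unfolding graph_orbit_def by blast
  have "orbsum d e n R D \<noteq> 0"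
    using orbsum_image_hact[OF N(1) DA] orbsum_self[OF D(1)] card_stab_pos[OF DA] N(2) by simp
  moreover have "D \<in> Q" using self_in_graph_orbit[OF DA] D(2) by simp
  ultimately show ?thesis using that by blast
qed

lemma orbsum_eq_0_off_orbit:
  assumes "Q \<in> GO" "R \<in> Q" "T \<notin> Q"
  shows "orbsum d e n R T = 0"
proof (rule ccontr)
  assume "orbsum d e n R T \<noteq> 0"
  then have "T \<in> orbit R"
    by (rule orbsum_nonzero_imp_mem_orbit[OF graph_orbits_memberD(2)[OF assms(1,2)]])
  then show False using graph_orbits_memberD(1)[OF assms(1,2)] assms(3) by simp
qed

lemma orbsum_in_invariants:
  assumes "R \<subseteq> Arr"
  shows "orbsum d e n R \<in> invariants d e n"
  unfolding invariants_def ext_alg_def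
proof (intro CollectI conjI allI impI ballI)
  fix T assume "orbsum d e n R T \<noteq> 0"
  then show "T \<subseteq> Arr"
    using orbsum_nonzero_imp_mem_orbit[OF assms] graph_orbit_subset_Pow[OF assms] by blast
qed (rule wact_orbsum[OF _ assms])

lemma card_eq_if_orbsum_nonzero:
  assumes "R \<subseteq> Arr" "orbsum d e n R T \<noteq> 0"
  shows "card T = card R"
proof -
  obtain M where "M \<in> W" "T = act M ` R"
    using orbsum_nonzero_imp_mem_orbit[OF assms] unfolding graph_orbit_def by blast
  then show ?thesis using card_image[OF inj_on_subset[OF inj_on_hact assms(1)]] by simp
qed

lemma orbsums_linearly_independent:
  assumes reps: "\<forall>Q\<in>GO. rep Q \<in> Q"
    and zero: "\<forall>T. (\<Sum>Q\<in>GO. c Q * orbsum d e n (rep Q) T) = 0"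
    and Q: "Q \<in> GO"
  shows "c Q = 0"
proof -
  have "rep Q \<in> Q" using reps Q by blast
  then obtain D where D: "D \<in> Q" "orbsum d e n (rep Q) D \<noteq> 0"
    by (rule orbsum_nonzero_somewhere_on_orbit[OF Q])
  have "orbsum d e n (rep Q') D = 0" if Q': "Q' \<in> GO - {Q}" for Q'
  proof (rule orbsum_eq_0_off_orbit)
    show "Q' \<in> GO" "rep Q' \<in> Q'" using Q' reps by auto
    show "D \<notin> Q'" using graph_orbits_disjoint[OF Q _ D(1)] Q' by blast
  qed
  then have "(\<Sum>Q'\<in>GO - {Q}. c Q' * orbsum d e n (rep Q') D) = 0"
    by simp
  then have "(\<Sum>Q'\<in>GO. c Q' * orbsum d e n (rep Q') D) = c Q * orbsum d e n (rep Q) D"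
    by (simp add: sum.remove[OF finite_graph_orbits Q])
  then show ?thesis using zero D(2) by simp
qed

lemma wact_apply_Pow:
  "wact n (d * e) M x T = (\<Sum>S\<in>Pow Arr. if act M ` S = T then wsgn M S * x S else 0)"
proof -
  have eq: "{S. S \<subseteq> Arr \<and> act M ` S = T} = {S \<in> Pow Arr. act M ` S = T}" by auto
  have "finite (Pow Arr)" using finite_Arr by simp
  then show ?thesis unfolding wact_def eq by (rule sum.inter_filter)
qed

lemma sum_wact_eq_sum_orbsum:
  "(\<Sum>M\<in>W. wact n (d * e) M x T) = (\<Sum>S\<in>Pow Arr. x S * orbsum d e n S T)"
proof -
  have "(\<Sum>M\<in>W. wact n (d * e) M x T)
      = (\<Sum>S\<in>Pow Arr. \<Sum>M\<in>W. if act M ` S = T then wsgn M S * x S else 0)"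
    unfolding wact_apply_Pow by (rule sum.swap)
  also have "\<dots> = (\<Sum>S\<in>Pow Arr. x S * orbsum d e n S T)"
  proof (rule sum.cong[OF refl])
    fix S assume "S \<in> Pow Arr"
    then have "x S * orbsum d e n S T = (\<Sum>M\<in>W. x S * (if act M ` S = T then wsgn M S else 0))"
      by (simp add: orbsum_apply sum_distrib_left)
    also have "\<dots> = (\<Sum>M\<in>W. if act M ` S = T then wsgn M S * x S else 0)"
      by (intro sum.cong) auto
    finally show "(\<Sum>M\<in>W. if act M ` S = T then wsgn M S * x S else 0) = x S * orbsum d e n S T"
      by (rule sym)
  qed
  finally show ?thesis .
qed

lemma sum_Pow_Arr_eq_sum_graph_orbits:
  "(\<Sum>S\<in>Pow Arr. x S * orbsum d e n S T) = (\<Sum>Q\<in>GO. \<Sum>S\<in>Q. x S * orbsum d e n S T)"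
proof -
  have "x S * orbsum d e n S T = 0" if S: "S \<in> Pow Arr - \<Union>GO" for S
  proof -
    have "\<not> invariant_graph d e n S" using S invariant_graph_in_graph_orbits by blast
    then show ?thesis using orbsum_eq_0_if_not_invariant S by simp
  qed
  moreover have "\<Union>GO \<subseteq> Pow Arr" using graph_orbits_subset_Pow by blast
  ultimately have "(\<Sum>S\<in>Pow Arr. x S * orbsum d e n S T) = (\<Sum>S\<in>\<Union>GO. x S * orbsum d e n S T)"
    by (intro sum.mono_neutral_right) (simp_all add: finite_Arr)
  also have "\<dots> = (\<Sum>Q\<in>GO. \<Sum>S\<in>Q. x S * orbsum d e n S T)"
  proof (subst sum.Union_disjoint)
    show "\<forall>Q\<in>GO. finite Q" using finite_graph_orbits_member by blast
    show "\<forall>Q\<in>GO. \<forall>Q'\<in>GO. Q \<noteq> Q' \<longrightarrow> Q \<inter> Q' = {}" using graph_orbits_disjoint by blast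
  qed simp
  finally show ?thesis .
qed

lemma orbsums_span:
  assumes reps: "\<forall>Q\<in>GO. rep Q \<in> Q" and x: "x \<in> invariants d e n"
  shows "\<exists>c. \<forall>T. x T = (\<Sum>Q\<in>GO. c Q * orbsum d e n (rep Q) T)"
proof -
  define \<epsilon> where "\<epsilon> Q S = (SOME c. \<forall>T. orbsum d e n S T = c * orbsum d e n (rep Q) T)" for Q S
  have \<epsilon>: "orbsum d e n S T = \<epsilon> Q S * orbsum d e n (rep Q) T" if "Q \<in> GO" "S \<in> Q" for Q S T
    using someI_ex[OF orbsum_proportional[OF that]] reps that(1) unfolding \<epsilon>_def by blast
  define c where "c Q = (\<Sum>S\<in>Q. x S * \<epsilon> Q S) / of_nat (card W)" for Q
  have "0 < card W" using finite_W idmat_in_W card_gt_0_iff by blast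
  have "x T = (\<Sum>Q\<in>GO. c Q * orbsum d e n (rep Q) T)" for T
  proof -
    have "of_nat (card W) * x T = (\<Sum>M\<in>W. wact n (d * e) M x T)"
      using x by (simp add: invariants_def)
    also have "\<dots> = (\<Sum>Q\<in>GO. \<Sum>S\<in>Q. x S * orbsum d e n S T)"
      unfolding sum_wact_eq_sum_orbsum sum_Pow_Arr_eq_sum_graph_orbits ..
    also have "\<dots> = (\<Sum>Q\<in>GO. (\<Sum>S\<in>Q. x S * \<epsilon> Q S) * orbsum d e n (rep Q) T)"
      by (intro sum.cong refl) (simp add: \<epsilon> sum_distrib_right mult.assoc)
    finally have "x T = (\<Sum>Q\<in>GO. (\<Sum>S\<in>Q. x S * \<epsilon> Q S) * orbsum d e n (rep Q) T) / of_nat (card W)"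
      using \<open>0 < card W\<close> by (simp add: field_simps)
    then show ?thesis unfolding sum_divide_distrib by (simp add: c_def)
  qed
  then show ?thesis by blast
qed

end

theorem theorem3p18:
  fixes d e n :: nat and rep :: "hyp set set \<Rightarrow> hyp set"
  assumes "d > 1" and "e \<ge> 1" and "n \<ge> 1"
    and "\<forall>Q\<in>graph_orbits d e n. rep Q \<in> Q"
  shows "(\<forall>Q\<in>graph_orbits d e n. orbsum d e n (rep Q) \<noteq> (\<lambda>_. 0))
       \<and> (\<forall>Q\<in>graph_orbits d e n. orbsum d e n (rep Q) \<in> invariants d e n)
       \<and> (\<forall>Q\<in>graph_orbits d e n. \<forall>T. orbsum d e n (rep Q) T \<noteq> 0 \<longrightarrow> card T = card (rep Q))
       \<and> (\<forall>c :: hyp set set \<Rightarrow> rat.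
            (\<forall>T. (\<Sum>Q\<in>graph_orbits d e n. c Q * orbsum d e n (rep Q) T) = 0)
            \<longrightarrow> (\<forall>Q\<in>graph_orbits d e n. c Q = 0))
       \<and> (\<forall>x\<in>invariants d e n. \<exists>c :: hyp set set \<Rightarrow> rat.
            \<forall>T. x T = (\<Sum>Q\<in>graph_orbits d e n. c Q * orbsum d e n (rep Q) T))"
proof -
  interpret imprimitive_group d e n
    using assms(1,2) by unfold_locales simp
  have reps: "\<forall>Q\<in>GO. rep Q \<in> Q" by (fact assms(4))
  have rep_Arr: "rep Q \<subseteq> Arr" if "Q \<in> GO" for Q
    using graph_orbits_memberD(2)[OF that] reps that by blast
  have "orbsum d e n (rep Q) \<noteq> (\<lambda>_. 0)" if "Q \<in> GO" for Q
    using orbsum_nonzero_somewhere_on_orbit[OF that] reps that by (metis (full_types))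
  then show ?thesis
    using orbsum_in_invariants[OF rep_Arr] card_eq_if_orbsum_nonzero[OF rep_Arr]
      orbsums_linearly_independent[OF reps] orbsums_span[OF reps]
    by blast
qed

end
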